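(* Let $\Gamma,\Delta$ be finitely generated groups with free continuous actions on compact metric spaces $Y$ and $X$ respectively, and let $f:Y\to X$ be a bijection (not necessarily continuous) inducing a quasi-isometry of warped cones, i.e. there are an index set $I$, maps $i\mapsto t_i$ and $i\mapsto\tau_i$ from $I$ onto $(0,\infty)$, and $C\ge1,A\ge0$ such that each $f:(t_iY,d_\Gamma)\to(\tau_iX,d_\Delta)$ is a $(C,A)$-quasi-isometry. Then there is a cocycle $\delta:\Gamma\times Y\to\Delta$ (i.e. $\delta(\gamma_2,\gamma_1y)\delta(\gamma_1,y)=\delta(\gamma_2\gamma_1,y)$) such that for each fixed $y$ the map $\gamma\mapsto\delta(\gamma,y)$ is a bijection $\Gamma\to\Delta$, and there are $C'\ge1$, $A'\ge0$ with $C'^{-1}|\gamma|-A'\le|\delta(\gamma,y)|\le C'|\gamma|+A'$ for all $\gamma,y$. In particular, $\Gamma$ and $\Delta$ are bijectively quasi-isometric.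
   Context: $|\cdot|$ is word length with respect to fixed finite symmetric generating sets. For a compact metric space $(Y,d)$ with a $\Gamma$-action and $t>0$, $tY$ is $Y$ with metric $td$ and $d_\Gamma$ is the largest metric on $tY$ with $d_\Gamma\le td$ and $d_\Gamma(y,sy)\le1$ for generators $s$. A $(C,A)$-quasi-isometry $g:Z\to W$ satisfies $C^{-1}d(z,z')-A\le d(g(z),g(z'))\le Cd(z,z')+A$ and the $A$-neighbourhood of $g(Z)$ equals $W$. *)

theory Defs
  imports "HOL-Analysis.Analysis" "HOL-Algebra.Group_Action" "HOL-Algebra.Generated_Groups"
begin

definition fin_sym_gen_set :: "('g, 'b) monoid_scheme \<Rightarrow> 'g set \<Rightarrow> bool" where
  "fin_sym_gen_set G S \<longleftrightarrow> finite S \<and> S \<subseteq> carrier G \<and>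
     (\<forall>s\<in>S. inv\<^bsub>G\<^esub> s \<in> S) \<and> generate G S = carrier G"

definition word_length :: "('g, 'b) monoid_scheme \<Rightarrow> 'g set \<Rightarrow> 'g \<Rightarrow> nat" where
  "word_length G S g =
     (LEAST n. \<exists>ws. set ws \<subseteq> S \<and> length ws = n \<and> foldr (\<otimes>\<^bsub>G\<^esub>) ws \<one>\<^bsub>G\<^esub> = g)"

definition is_metric :: "('a \<Rightarrow> 'a \<Rightarrow> real) \<Rightarrow> bool" where
  "is_metric \<rho> \<longleftrightarrow> (\<forall>a b. 0 \<le> \<rho> a b) \<and> (\<forall>a b. \<rho> a b = 0 \<longleftrightarrow> a = b) \<and>
     (\<forall>a b. \<rho> a b = \<rho> b a) \<and> (\<forall>a b c. \<rho> a c \<le> \<rho> a b + \<rho> b c)"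

text \<open>Warped metric d_Gamma on tY: the largest metric with d_Gamma \<le> t d and
  d_Gamma(y, s y) \<le> 1 for all generators s (pointwise supremum of all such metrics).\<close>
definition warped_dist :: "'g set \<Rightarrow> ('g \<Rightarrow> 'y \<Rightarrow> 'y) \<Rightarrow> real \<Rightarrow> 'y::metric_space \<Rightarrow> 'y \<Rightarrow> real" where
  "warped_dist S \<phi> t y y' =
     Sup {\<rho> y y' | \<rho>. is_metric \<rho> \<and> (\<forall>a b. \<rho> a b \<le> t * dist a b) \<and>
                        (\<forall>s\<in>S. \<forall>a. \<rho> a (\<phi> s a) \<le> 1)}"

definition quasi_isometry ::
  "real \<Rightarrow> real \<Rightarrow> ('a \<Rightarrow> 'a \<Rightarrow> real) \<Rightarrow> ('b \<Rightarrow> 'b \<Rightarrow> real) \<Rightarrow> ('a \<Rightarrow> 'b) \<Rightarrow> bool" where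
  "quasi_isometry C A dZ dW g \<longleftrightarrow>
     (\<forall>z z'. inverse C * dZ z z' - A \<le> dW (g z) (g z') \<and> dW (g z) (g z') \<le> C * dZ z z' + A) \<and>
     {w. \<exists>z. dW w (g z) \<le> A} = UNIV"

definition free_cont_action :: "('g, 'b) monoid_scheme \<Rightarrow> ('g \<Rightarrow> 'y::metric_space \<Rightarrow> 'y) \<Rightarrow> bool" where
  "free_cont_action G \<phi> \<longleftrightarrow> group_action G UNIV \<phi> \<and>
     (\<forall>g\<in>carrier G. continuous_on UNIV (\<phi> g)) \<and>
     (\<forall>g\<in>carrier G. \<forall>y. \<phi> g y = y \<longrightarrow> g = \<one>\<^bsub>G\<^esub>)"

end

(*
  At large scales the warped metric only sees the group action.  It dominates the path metric in
  which a jump along a generator costs 1 and a drift costs t times its length; a path of bounded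
  cost at a large scale t has boundedly many jumps and drift O(1/t), so by compactness and uniform
  continuity of the generators two points at bounded warped distance for arbitrarily large t lie in
  one orbit, with a word of bounded length between them.  Since d_Gamma(y, gamma y) <= |gamma| at
  every scale, f maps Gamma-orbits into Delta-orbits with linear control of word lengths, and the
  same argument for the inverse of f gives the converse.  Freeness makes the element delta(gamma, y)
  with f(gamma y) = delta(gamma, y) f(y) unique, which gives the cocycle identity and bijectivity.
*)

theory Submission
  imports Defs
begin

section \<open>Words in finitely generated groups\<close>

locale fin_gen_group = group G for G :: "('g, 'b) monoid_scheme" (structure) +
  fixes S :: "'g set"
  assumes fin_sym_gen: "fin_sym_gen_set G S"
begin

lemma gens_carrier: "S \<subseteq> carrier G"
  and gens_inv: "s \<in> S \<Longrightarrow> inv s \<in> S"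
  and generate_gens: "generate G S = carrier G"
  and finite_gens: "finite S"
  using fin_sym_gen unfolding fin_sym_gen_set_def by auto

abbreviation word_eval :: "'g list \<Rightarrow> 'g" where
  "word_eval ws \<equiv> foldr (\<otimes>) ws \<one>"

lemma word_eval_closed: "set ws \<subseteq> carrier G \<Longrightarrow> word_eval ws \<in> carrier G"
  by (induction ws) auto

lemma word_eval_append:
  "set xs \<subseteq> carrier G \<Longrightarrow> set ys \<subseteq> carrier G \<Longrightarrow> word_eval (xs @ ys) = word_eval xs \<otimes> word_eval ys"
  by (induction xs) (auto simp: m_assoc word_eval_closed)

lemma generate_imp_word: "g \<in> generate G S \<Longrightarrow> \<exists>ws. set ws \<subseteq> S \<and> word_eval ws = g"
proof (induction rule: generate.induct)
  case one
  show ?case by (intro exI[of _ "[]"]) simp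
next
  case (incl h)
  then show ?case using gens_carrier by (intro exI[of _ "[h]"]) auto
next
  case (inv h)
  then show ?case using gens_carrier gens_inv by (intro exI[of _ "[inv h]"]) auto
next
  case (eng h1 h2)
  then obtain ws1 ws2 where "set ws1 \<subseteq> S" "word_eval ws1 = h1" "set ws2 \<subseteq> S" "word_eval ws2 = h2"
    by blast
  then show ?case
    using gens_carrier word_eval_append[of ws1 ws2] by (intro exI[of _ "ws1 @ ws2"]) auto
qed

lemma word_length_witness:
  assumes "g \<in> carrier G"
  shows "\<exists>ws. set ws \<subseteq> S \<and> length ws = word_length G S g \<and> word_eval ws = g"
proof -
  obtain ws where "set ws \<subseteq> S" "word_eval ws = g"
    using generate_imp_word generate_gens assms by blast
  then have "\<exists>n ws. set ws \<subseteq> S \<and> length ws = n \<and> word_eval ws = g" by blast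
  then show ?thesis unfolding word_length_def by (rule LeastI_ex)
qed

lemma word_length_le: "set ws \<subseteq> S \<Longrightarrow> word_length G S (word_eval ws) \<le> length ws"
  unfolding word_length_def by (rule Least_le) auto

end

locale warped_cone = fin_gen_group G S for G :: "('g, 'b) monoid_scheme" (structure) and S :: "'g set" +
  fixes \<phi> :: "'g \<Rightarrow> 'y::metric_space \<Rightarrow> 'y"
  assumes action: "group_action G UNIV \<phi>"
    and continuous_action: "g \<in> carrier G \<Longrightarrow> continuous_on UNIV (\<phi> g)"
    and compact_space: "compact (UNIV :: 'y set)"
begin

lemma action_one: "\<phi> \<one> y = y"
proof -
  have "(\<lambda>x \<in> UNIV. x) y = \<phi> \<one> y"
    using group_action.id_eq_one[OF action] by simp
  then show ?thesis by simp
qed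

lemma action_mult: "g1 \<in> carrier G \<Longrightarrow> g2 \<in> carrier G \<Longrightarrow> \<phi> (g1 \<otimes> g2) y = \<phi> g1 (\<phi> g2 y)"
  using group_action.composition_rule[OF action] by blast

lemma gens_uniformly_continuous:
  assumes "0 < e"
  shows "\<exists>d>0. \<forall>s\<in>S. \<forall>x y. dist x y < d \<longrightarrow> dist (\<phi> s x) (\<phi> s y) < e"
proof -
  have "\<forall>s\<in>S. \<forall>\<^sub>F p in uniformity. dist (\<phi> s (fst p)) (\<phi> s (snd p)) < e"
  proof
    fix s assume "s \<in> S"
    then have "uniformly_continuous_on UNIV (\<phi> s)"
      using continuous_action gens_carrier compact_space compact_uniformly_continuous by blast
    then obtain d where "d > 0" "\<forall>x y. dist y x < d \<longrightarrow> dist (\<phi> s y) (\<phi> s x) < e"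
      using assms unfolding uniformly_continuous_on_def by blast
    then show "\<forall>\<^sub>F p in uniformity. dist (\<phi> s (fst p)) (\<phi> s (snd p)) < e"
      unfolding eventually_uniformity_metric by auto
  qed
  then have "\<forall>\<^sub>F p in uniformity. \<forall>s\<in>S. dist (\<phi> s (fst p)) (\<phi> s (snd p)) < e"
    by (rule eventually_ball_finite[OF finite_gens])
  then show ?thesis unfolding eventually_uniformity_metric by auto
qed

section \<open>Chains and the path metric of a warped cone\<close>

inductive warp_chain :: "'y \<Rightarrow> 'y \<Rightarrow> nat \<Rightarrow> real \<Rightarrow> bool" for a where
  start: "warp_chain a a 0 0"
| drift: "warp_chain a b m D \<Longrightarrow> warp_chain a b' m (D + dist b b')"
| jump: "warp_chain a b m D \<Longrightarrow> s \<in> S \<Longrightarrow> warp_chain a (\<phi> s b) (Suc m) D"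

lemma warp_chain_drift_nonneg: "warp_chain a b m D \<Longrightarrow> 0 \<le> D"
  by (induction rule: warp_chain.induct) auto

lemma warp_chain_trans:
  "warp_chain b c m2 D2 \<Longrightarrow> warp_chain a b m1 D1 \<Longrightarrow> warp_chain a c (m1 + m2) (D1 + D2)"
proof (induction rule: warp_chain.induct)
  case start
  then show ?case by simp
next
  case (drift b' m D b'')
  then show ?case using warp_chain.drift[of a b' "m1 + m" "D1 + D" b''] by (simp add: add.assoc)
next
  case (jump b' m D s)
  then show ?case using warp_chain.jump[of a b' "m1 + m" "D1 + D" s] by simp
qed

lemma warp_chain_dist: "warp_chain a b 0 (dist a b)"
  using warp_chain.drift[OF warp_chain.start, of a b] by simp

lemma warp_chain_jump_back: "s \<in> S \<Longrightarrow> warp_chain (\<phi> s a) a 1 0"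
proof -
  assume s: "s \<in> S"
  then have "inv s \<in> S" "\<phi> (inv s) (\<phi> s a) = a"
    using gens_inv gens_carrier action_mult[of "inv s" s a] action_one by auto
  then show ?thesis using warp_chain.jump[OF warp_chain.start[of "\<phi> s a"]] by fastforce
qed

lemma warp_chain_sym: "warp_chain a b m D \<Longrightarrow> warp_chain b a m D"
proof (induction rule: warp_chain.induct)
  case start
  show ?case by (rule warp_chain.start)
next
  case (drift b m D b')
  have "warp_chain b' a (0 + m) (dist b' b + D)"
    by (rule warp_chain_trans[OF drift.IH warp_chain_dist])
  then show ?case by (simp add: dist_commute add.commute)
next
  case (jump b m D s)
  have "warp_chain (\<phi> s b) a (1 + m) (0 + D)"
    by (rule warp_chain_trans[OF jump.IH warp_chain_jump_back[OF jump.hyps(2)]])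
  then show ?case by simp
qed

lemma warp_chain_no_jumps: "warp_chain a b 0 D \<Longrightarrow> dist a b \<le> D"
proof (induction b "0::nat" D rule: warp_chain.induct)
  case start
  then show ?case by simp
next
  case (drift b D b')
  then show ?case using dist_triangle[of a b' b] by simp
qed

lemma warp_chain_last_jump:
  "warp_chain a b (Suc m) D \<Longrightarrow>
     \<exists>c s D1 D2. warp_chain a c m D1 \<and> s \<in> S \<and> dist (\<phi> s c) b \<le> D2 \<and> D1 + D2 \<le> D"
proof (induction b "Suc m" D arbitrary: m rule: warp_chain.induct)
  case (drift b D b')
  then obtain c s D1 D2 where h: "warp_chain a c m D1" "s \<in> S" "dist (\<phi> s c) b \<le> D2" "D1 + D2 \<le> D"
    by blast
  have "dist (\<phi> s c) b' \<le> D2 + dist b b'" using h(3) dist_triangle[of "\<phi> s c" b' b] by simp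
  then show ?case using h by (intro exI[of _ c] exI[of _ s] exI[of _ D1] exI[of _ "D2 + dist b b'"]) auto
next
  case (jump b k D s)
  then show ?case by (intro exI[of _ b] exI[of _ s] exI[of _ D] exI[of _ 0]) auto
qed

definition path_dist :: "real \<Rightarrow> 'y \<Rightarrow> 'y \<Rightarrow> real" where
  "path_dist t a b = Inf {real m + t * D | m D. warp_chain a b m D}"

lemma path_dist_costs_nonempty: "{real m + t * D | m D. warp_chain a b m D} \<noteq> {}"
  using warp_chain_dist by blast

lemma path_dist_costs_bdd_below: "0 \<le> t \<Longrightarrow> bdd_below {real m + t * D | m D. warp_chain a b m D}"
  unfolding bdd_below_def using warp_chain_drift_nonneg by (intro exI[of _ 0]) auto

lemma path_dist_le: "0 \<le> t \<Longrightarrow> warp_chain a b m D \<Longrightarrow> path_dist t a b \<le> real m + t * D"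
  unfolding path_dist_def by (rule cInf_lower[OF _ path_dist_costs_bdd_below]) auto

lemma path_dist_less_imp_chain:
  "path_dist t a b < r \<Longrightarrow> \<exists>m D. warp_chain a b m D \<and> real m + t * D < r"
  using cInf_lessD[OF path_dist_costs_nonempty] unfolding path_dist_def by blast

lemma path_dist_nonneg: "0 \<le> t \<Longrightarrow> 0 \<le> path_dist t a b"
  unfolding path_dist_def using warp_chain_drift_nonneg
  by (intro cInf_greatest[OF path_dist_costs_nonempty]) auto

lemma path_dist_sym: "path_dist t a b = path_dist t b a"
  unfolding path_dist_def using warp_chain_sym by metis

lemma path_dist_triangle:
  assumes t: "0 \<le> t"
  shows "path_dist t a c \<le> path_dist t a b + path_dist t b c"
proof -
  have "path_dist t a c - (real m2 + t * D2) \<le> real m1 + t * D1"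
    if "warp_chain a b m1 D1" "warp_chain b c m2 D2" for m1 D1 m2 D2
    using path_dist_le[OF t warp_chain_trans[OF that(2,1)]] by (simp add: algebra_simps)
  then have "path_dist t a c - (real m2 + t * D2) \<le> path_dist t a b"
    if "warp_chain b c m2 D2" for m2 D2
    unfolding path_dist_def[of t a b] using that
    by (intro cInf_greatest[OF path_dist_costs_nonempty]) auto
  then have "path_dist t a c - path_dist t a b \<le> path_dist t b c"
    unfolding path_dist_def[of t b c]
    by (intro cInf_greatest[OF path_dist_costs_nonempty]) force
  then show ?thesis by simp
qed

lemma path_dist_self: "0 \<le> t \<Longrightarrow> path_dist t a a = 0"
  using path_dist_le[OF _ warp_chain.start, of t a] path_dist_nonneg[of t a a] by simp

text \<open>A chain cheaper than \<open>min 1 (t * dist a b)\<close> has no jump, so its drift is at least \<open>dist a b\<close>.\<close>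
lemma path_dist_eq_0_imp_eq:
  assumes t: "0 < t" and "path_dist t a b = 0"
  shows "a = b"
proof (rule ccontr)
  assume "a \<noteq> b"
  then have "path_dist t a b < min 1 (t * dist a b)" using assms by simp
  then obtain m D where h: "warp_chain a b m D" "real m + t * D < min 1 (t * dist a b)"
    using path_dist_less_imp_chain by blast
  have "0 \<le> t * D" using warp_chain_drift_nonneg[OF h(1)] t by simp
  then have "m = 0" using h(2) by simp
  then have "t * dist a b \<le> t * D" using warp_chain_no_jumps h(1) t by simp
  then show False using h(2) \<open>m = 0\<close> by simp
qed

lemma path_dist_admissible:
  assumes t: "0 < t"
  shows "is_metric (path_dist t)" "path_dist t a b \<le> t * dist a b"
    "s \<in> S \<Longrightarrow> path_dist t a (\<phi> s a) \<le> 1"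
proof -
  show "is_metric (path_dist t)"
    unfolding is_metric_def
    using path_dist_nonneg path_dist_eq_0_imp_eq path_dist_self path_dist_sym path_dist_triangle t
    by (metis less_eq_real_def)
  show "path_dist t a b \<le> t * dist a b" using path_dist_le[OF _ warp_chain_dist, of t a b] t by simp
  show "s \<in> S \<Longrightarrow> path_dist t a (\<phi> s a) \<le> 1"
    using path_dist_le[OF _ warp_chain.jump[OF warp_chain.start], of t] t by simp
qed

lemma warped_dist_costs_bdd_above:
  "bdd_above {\<rho> y y' | \<rho>. is_metric \<rho> \<and> (\<forall>a b. \<rho> a b \<le> t * dist a b) \<and> (\<forall>s\<in>S. \<forall>a. \<rho> a (\<phi> s a) \<le> 1)}"
  unfolding bdd_above_def by (intro exI[of _ "t * dist y y'"]) auto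

lemma path_dist_le_warped_dist: "0 < t \<Longrightarrow> path_dist t y y' \<le> warped_dist S \<phi> t y y'"
  unfolding warped_dist_def
  by (rule cSup_upper[OF _ warped_dist_costs_bdd_above]) (use path_dist_admissible in blast)

lemma admissible_metric_word_bound:
  assumes "is_metric \<rho>" "\<forall>s\<in>S. \<forall>a. \<rho> a (\<phi> s a) \<le> 1" "set ws \<subseteq> S"
  shows "\<rho> y (\<phi> (word_eval ws) y) \<le> real (length ws)"
  using assms(3)
proof (induction ws)
  case Nil
  have "\<rho> y y = 0" using assms(1) unfolding is_metric_def by blast
  then show ?case using action_one by simp
next
  case (Cons s ws)
  let ?w = "word_eval ws"
  have c: "?w \<in> carrier G" "s \<in> carrier G" using Cons.prems gens_carrier word_eval_closed by auto
  have "\<rho> y (\<phi> (s \<otimes> ?w) y) \<le> \<rho> y (\<phi> ?w y) + \<rho> (\<phi> ?w y) (\<phi> s (\<phi> ?w y))"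
    using assms(1) action_mult[OF c(2) c(1)] unfolding is_metric_def by simp
  also have "\<dots> \<le> real (length ws) + 1"
    using Cons assms(2) by (intro add_mono) auto
  finally show ?case by simp
qed

lemma warped_dist_orbit_le_word_length:
  assumes "0 < t" "g \<in> carrier G"
  shows "warped_dist S \<phi> t y (\<phi> g y) \<le> real (word_length G S g)"
proof -
  obtain ws where w: "set ws \<subseteq> S" "length ws = word_length G S g" "word_eval ws = g"
    using word_length_witness assms(2) by blast
  show ?thesis
    unfolding warped_dist_def
  proof (rule cSup_least)
    show "{\<rho> y (\<phi> g y) | \<rho>. is_metric \<rho> \<and> (\<forall>a b. \<rho> a b \<le> t * dist a b) \<and>
            (\<forall>s\<in>S. \<forall>a. \<rho> a (\<phi> s a) \<le> 1)} \<noteq> {}"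
      using path_dist_admissible[OF assms(1)] by blast
  qed (use admissible_metric_word_bound[OF _ _ w(1)] w in auto)
qed

section \<open>Points at bounded warped distance at all large scales\<close>

lemma word_near_after_jump:
  assumes s: "s \<in> S" and ws: "set ws \<subseteq> S"
    and cont: "\<forall>x y. dist x y < d \<longrightarrow> dist (\<phi> s x) (\<phi> s y) < \<epsilon>/2"
    and near: "dist c (\<phi> (word_eval ws) a) < d" and jump: "dist (\<phi> s c) b \<le> \<epsilon>/2"
  shows "dist b (\<phi> (word_eval (s # ws)) a) \<le> \<epsilon>"
proof -
  let ?x = "\<phi> (word_eval ws) a"
  have "\<phi> (word_eval (s # ws)) a = \<phi> s ?x"
    using ws s gens_carrier by (simp add: action_mult subset_trans word_eval_closed subsetD)
  moreover have "dist (\<phi> s c) (\<phi> s ?x) < \<epsilon>/2"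
    using cont near by simp
  ultimately show ?thesis
    using dist_triangle[of b "\<phi> s ?x" "\<phi> s c"] jump by (simp add: dist_commute)
qed

lemma empty_word_near_chain_without_jumps:
  "warp_chain a b 0 D \<Longrightarrow> D \<le> \<epsilon> \<Longrightarrow>
     \<exists>ws. set ws \<subseteq> S \<and> length ws \<le> m \<and> dist b (\<phi> (word_eval ws) a) \<le> \<epsilon>"
  using warp_chain_no_jumps by (intro exI[of _ "[]"]) (fastforce simp: action_one dist_commute)

lemma word_near_chain_of_small_drift:
  assumes "0 < \<epsilon>"
  shows "\<exists>\<eta>>0. \<forall>a b k D. k \<le> m \<longrightarrow> warp_chain a b k D \<longrightarrow> D \<le> \<eta> \<longrightarrow>
           (\<exists>ws. set ws \<subseteq> S \<and> length ws \<le> m \<and> dist b (\<phi> (word_eval ws) a) \<le> \<epsilon>)"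
  using assms
proof (induction m arbitrary: \<epsilon>)
  case 0
  show ?case
  proof (intro exI[of _ \<epsilon>] conjI allI impI)
    fix a b k D assume "k \<le> 0" "warp_chain a b k D" "D \<le> \<epsilon>"
    then show "\<exists>ws. set ws \<subseteq> S \<and> length ws \<le> 0 \<and> dist b (\<phi> (word_eval ws) a) \<le> \<epsilon>"
      by (intro empty_word_near_chain_without_jumps) simp_all
  qed (use 0 in simp)
next
  case (Suc m)
  obtain d where d: "d > 0" "\<forall>s\<in>S. \<forall>x y. dist x y < d \<longrightarrow> dist (\<phi> s x) (\<phi> s y) < \<epsilon>/2"
    using gens_uniformly_continuous[of "\<epsilon>/2"] Suc.prems by auto
  obtain \<eta> where \<eta>: "\<eta> > 0" "\<forall>a b k D. k \<le> m \<longrightarrow> warp_chain a b k D \<longrightarrow> D \<le> \<eta> \<longrightarrow>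
      (\<exists>ws. set ws \<subseteq> S \<and> length ws \<le> m \<and> dist b (\<phi> (word_eval ws) a) \<le> d/2)"
    using Suc.IH[of "d/2"] d(1) by auto
  show ?case
  proof (intro exI[of _ "min \<eta> (\<epsilon>/2)"] conjI allI impI)
    show "0 < min \<eta> (\<epsilon>/2)" using \<eta>(1) Suc.prems by simp
  next
    fix a b k D assume h: "k \<le> Suc m" "warp_chain a b k D" "D \<le> min \<eta> (\<epsilon>/2)"
    show "\<exists>ws. set ws \<subseteq> S \<and> length ws \<le> Suc m \<and> dist b (\<phi> (word_eval ws) a) \<le> \<epsilon>"
    proof (cases k)
      case 0
      then show ?thesis
        by (intro empty_word_near_chain_without_jumps) (use h(2,3) Suc.prems in auto)
    next
      case (Suc k')
      then obtain c s D1 D2 where c: "warp_chain a c k' D1" "s \<in> S" "dist (\<phi> s c) b \<le> D2" "D1 + D2 \<le> D"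
        using warp_chain_last_jump h(2) by blast
      have "0 \<le> D1" "0 \<le> D2"
        using warp_chain_drift_nonneg[OF c(1)] c(3) zero_le_dist[of "\<phi> s c" b] by linarith+
      then have "D1 \<le> \<eta>" "D2 \<le> \<epsilon>/2" using c(4) h(3) by auto
      moreover have "k' \<le> m" using Suc h(1) by simp
      ultimately obtain ws where ws: "set ws \<subseteq> S" "length ws \<le> m" "dist c (\<phi> (word_eval ws) a) \<le> d/2"
        using \<eta>(2) c(1) by blast
      have "dist c (\<phi> (word_eval ws) a) < d"
        using ws(3) d(1) by simp
      moreover have "dist (\<phi> s c) b \<le> \<epsilon>/2"
        using c(3) \<open>D2 \<le> \<epsilon>/2\<close> by simp
      ultimately have "dist b (\<phi> (word_eval (s # ws)) a) \<le> \<epsilon>"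
        by (rule word_near_after_jump[OF c(2) ws(1) bspec[OF d(2) c(2)]])
      then show ?thesis using ws c(2) by (intro exI[of _ "s # ws"]) auto
    qed
  qed
qed

text \<open>A chain of cost less than \<open>K + 1\<close> in \<open>tY\<close> has at most \<open>\<lceil>K\<rceil>\<close> jumps and drift
  less than \<open>(K + 1) / t\<close>.\<close>
lemma near_short_word_of_bounded_warped_dist:
  assumes bdd: "\<forall>T0. \<exists>t\<ge>T0. 0 < t \<and> warped_dist S \<phi> t a b \<le> K" and e: "0 < e"
  shows "\<exists>ws. set ws \<subseteq> S \<and> length ws \<le> nat \<lceil>K\<rceil> \<and> dist b (\<phi> (word_eval ws) a) \<le> e"
proof -
  obtain \<eta> where \<eta>: "\<eta> > 0" "\<forall>a b k D. k \<le> nat \<lceil>K\<rceil> \<longrightarrow> warp_chain a b k D \<longrightarrow> D \<le> \<eta> \<longrightarrow>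
      (\<exists>ws. set ws \<subseteq> S \<and> length ws \<le> nat \<lceil>K\<rceil> \<and> dist b (\<phi> (word_eval ws) a) \<le> e)"
    using word_near_chain_of_small_drift[OF e] by blast
  obtain t where t: "t \<ge> (K + 1) / \<eta>" "0 < t" "warped_dist S \<phi> t a b \<le> K"
    using bdd by blast
  then have "path_dist t a b < K + 1"
    using path_dist_le_warped_dist[of t a b] by simp
  then obtain m D where h: "warp_chain a b m D" "real m + t * D < K + 1"
    using path_dist_less_imp_chain by blast
  have "0 \<le> t * D"
    using warp_chain_drift_nonneg[OF h(1)] t(2) by simp
  then have "m \<le> nat \<lceil>K\<rceil>"
    using h(2) by linarith
  have "t * D < t * \<eta>"
    using h(2) \<open>0 \<le> t * D\<close> t(1) \<eta>(1) by (simp add: pos_divide_le_eq mult.commute)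
  then have "D \<le> \<eta>"
    using t(2) by simp
  then show ?thesis
    using \<eta>(2) h(1) \<open>m \<le> nat \<lceil>K\<rceil>\<close> by blast
qed

lemma orbit_point_of_bounded_warped_dist:
  assumes bdd: "\<forall>T0. \<exists>t\<ge>T0. 0 < t \<and> warped_dist S \<phi> t a b \<le> K"
  shows "\<exists>g\<in>carrier G. b = \<phi> g a \<and> real (word_length G S g) \<le> K + 1"
proof -
  have K0: "0 \<le> K"
    using bdd path_dist_nonneg path_dist_le_warped_dist by (meson dual_order.trans less_imp_le)
  define F where "F = (\<lambda>ws. \<phi> (word_eval ws) a) ` {ws. set ws \<subseteq> S \<and> length ws \<le> nat \<lceil>K\<rceil>}"
  have "finite F"
    unfolding F_def using finite_lists_length_le[OF finite_gens] by simp
  have "b \<in> closure F"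
    unfolding closure_approachable
  proof (intro allI impI)
    fix e :: real assume "0 < e"
    then obtain ws where "set ws \<subseteq> S" "length ws \<le> nat \<lceil>K\<rceil>" "dist b (\<phi> (word_eval ws) a) \<le> e/2"
      using near_short_word_of_bounded_warped_dist[OF bdd, of "e/2"] by auto
    then show "\<exists>y\<in>F. dist y b < e"
      using \<open>0 < e\<close> unfolding F_def by (intro bexI[of _ "\<phi> (word_eval ws) a"]) (auto simp: dist_commute)
  qed
  then have "b \<in> F"
    using \<open>finite F\<close> finite_imp_closed closure_closed by blast
  then obtain ws where ws: "set ws \<subseteq> S" "length ws \<le> nat \<lceil>K\<rceil>" "b = \<phi> (word_eval ws) a"
    unfolding F_def by blast
  have "real (word_length G S (word_eval ws)) \<le> real (nat \<lceil>K\<rceil>)"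
    using word_length_le[OF ws(1)] ws(2) by simp
  also have "\<dots> \<le> K + 1"
    using K0 by linarith
  finally show ?thesis
    using ws gens_carrier word_eval_closed[of ws] by (intro bexI[of _ "word_eval ws"]) auto
qed

end

section \<open>Cocycles of orbit-matching bijections\<close>

lemma (in group_action) free_action_cancel:
  assumes free: "\<forall>g\<in>carrier G. \<forall>y\<in>E. \<phi> g y = y \<longrightarrow> g = \<one>"
    and g: "g1 \<in> carrier G" "g2 \<in> carrier G" and x: "x \<in> E" and eq: "\<phi> g1 x = \<phi> g2 x"
  shows "g1 = g2"
proof -
  interpret group G
    using group_hom group_hom.axioms(1) by auto
  have "\<phi> (inv g2 \<otimes> g1) x = \<phi> (inv g2) (\<phi> g2 x)"
    using composition_rule[OF x, of "inv g2" g1] g eq by simp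
  also have "\<dots> = \<phi> (inv g2 \<otimes> g2) x"
    using composition_rule[OF x, of "inv g2" g2] g by simp
  also have "\<dots> = x"
    using g x id_eq_one[symmetric] by simp
  finally have "\<phi> (inv g2 \<otimes> g1) x = x" .
  moreover have "inv g2 \<otimes> g1 \<in> carrier G"
    using g by simp
  ultimately have "inv g2 \<otimes> g1 = \<one>"
    using free x by blast
  then show ?thesis
    using g by (simp add: inv_solve_left')
qed

locale free_orbit_matching =
  \<Gamma>: group_action \<Gamma> UNIV \<phi> + \<Delta>: group_action \<Delta> UNIV \<psi>
  for \<Gamma> :: "('g, 'b) monoid_scheme" and \<phi> :: "'g \<Rightarrow> 'y \<Rightarrow> 'y"
    and \<Delta> :: "('h, 'c) monoid_scheme" and \<psi> :: "'h \<Rightarrow> 'x \<Rightarrow> 'x" +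
  fixes f :: "'y \<Rightarrow> 'x"
  assumes free_\<Gamma>: "\<forall>g\<in>carrier \<Gamma>. \<forall>y. \<phi> g y = y \<longrightarrow> g = \<one>\<^bsub>\<Gamma>\<^esub>"
    and free_\<Delta>: "\<forall>d\<in>carrier \<Delta>. \<forall>x. \<psi> d x = x \<longrightarrow> d = \<one>\<^bsub>\<Delta>\<^esub>"
    and inj_f: "inj f"
    and orbit_fwd: "\<And>g y. g \<in> carrier \<Gamma> \<Longrightarrow> \<exists>d\<in>carrier \<Delta>. f (\<phi> g y) = \<psi> d (f y)"
    and orbit_bwd: "\<And>d y. d \<in> carrier \<Delta> \<Longrightarrow> \<exists>g\<in>carrier \<Gamma>. f (\<phi> g y) = \<psi> d (f y)"
begin

sublocale \<Gamma>: group \<Gamma>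
  using \<Gamma>.group_hom group_hom.axioms(1) by auto

sublocale \<Delta>: group \<Delta>
  using \<Delta>.group_hom group_hom.axioms(1) by auto

lemma cancel_\<Gamma>: "g1 \<in> carrier \<Gamma> \<Longrightarrow> g2 \<in> carrier \<Gamma> \<Longrightarrow> \<phi> g1 y = \<phi> g2 y \<Longrightarrow> g1 = g2"
  by (rule \<Gamma>.free_action_cancel[OF _ _ _ UNIV_I]) (use free_\<Gamma> in simp_all)

lemma cancel_\<Delta>: "d1 \<in> carrier \<Delta> \<Longrightarrow> d2 \<in> carrier \<Delta> \<Longrightarrow> \<psi> d1 x = \<psi> d2 x \<Longrightarrow> d1 = d2"
  by (rule \<Delta>.free_action_cancel[OF _ _ _ UNIV_I]) (use free_\<Delta> in simp_all)

definition orbit_cocycle :: "'g \<Rightarrow> 'y \<Rightarrow> 'h" where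
  "orbit_cocycle g y = (THE d. d \<in> carrier \<Delta> \<and> f (\<phi> g y) = \<psi> d (f y))"

lemma orbit_cocycle_spec:
  assumes g: "g \<in> carrier \<Gamma>"
  shows "orbit_cocycle g y \<in> carrier \<Delta> \<and> f (\<phi> g y) = \<psi> (orbit_cocycle g y) (f y)"
proof -
  obtain d where d: "d \<in> carrier \<Delta>" "f (\<phi> g y) = \<psi> d (f y)"
    using orbit_fwd[OF g] by blast
  have "\<exists>!d. d \<in> carrier \<Delta> \<and> f (\<phi> g y) = \<psi> d (f y)"
  proof (rule ex1I[of _ d])
    fix d' assume "d' \<in> carrier \<Delta> \<and> f (\<phi> g y) = \<psi> d' (f y)"
    then show "d' = d" using d cancel_\<Delta>[of d' d "f y"] by simp
  qed (use d in blast)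
  then show ?thesis unfolding orbit_cocycle_def by (rule theI')
qed

lemma orbit_cocycle_eq_iff:
  assumes g: "g \<in> carrier \<Gamma>" and d: "d \<in> carrier \<Delta>"
  shows "f (\<phi> g y) = \<psi> d (f y) \<longleftrightarrow> orbit_cocycle g y = d"
proof
  assume "f (\<phi> g y) = \<psi> d (f y)"
  then show "orbit_cocycle g y = d"
    using orbit_cocycle_spec[OF g, of y] cancel_\<Delta>[OF _ d, of "orbit_cocycle g y" "f y"] by simp
qed (use orbit_cocycle_spec[OF g, of y] in simp)

lemma orbit_cocycle_mult:
  assumes g: "g1 \<in> carrier \<Gamma>" "g2 \<in> carrier \<Gamma>"
  shows "orbit_cocycle g2 (\<phi> g1 y) \<otimes>\<^bsub>\<Delta>\<^esub> orbit_cocycle g1 y = orbit_cocycle (g2 \<otimes>\<^bsub>\<Gamma>\<^esub> g1) y"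
proof -
  have d: "orbit_cocycle g1 y \<in> carrier \<Delta>" "orbit_cocycle g2 (\<phi> g1 y) \<in> carrier \<Delta>"
    using orbit_cocycle_spec g by blast+
  have "f (\<phi> (g2 \<otimes>\<^bsub>\<Gamma>\<^esub> g1) y) = f (\<phi> g2 (\<phi> g1 y))"
    by (simp add: \<Gamma>.composition_rule[OF UNIV_I g(2,1)])
  also have "\<dots> = \<psi> (orbit_cocycle g2 (\<phi> g1 y)) (\<psi> (orbit_cocycle g1 y) (f y))"
    using orbit_cocycle_spec[OF g(1), of y] orbit_cocycle_spec[OF g(2), of "\<phi> g1 y"] by simp
  also have "\<dots> = \<psi> (orbit_cocycle g2 (\<phi> g1 y) \<otimes>\<^bsub>\<Delta>\<^esub> orbit_cocycle g1 y) (f y)"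
    by (simp add: \<Delta>.composition_rule[OF UNIV_I d(2,1)])
  finally show ?thesis
    using orbit_cocycle_eq_iff[OF \<Gamma>.m_closed[OF g(2,1)] \<Delta>.m_closed[OF d(2,1)]] by simp
qed

lemma orbit_cocycle_bij: "bij_betw (\<lambda>g. orbit_cocycle g y) (carrier \<Gamma>) (carrier \<Delta>)"
proof -
  have "inj_on (\<lambda>g. orbit_cocycle g y) (carrier \<Gamma>)"
  proof (rule inj_onI)
    fix g1 g2 assume g: "g1 \<in> carrier \<Gamma>" "g2 \<in> carrier \<Gamma>" "orbit_cocycle g1 y = orbit_cocycle g2 y"
    then have "f (\<phi> g1 y) = f (\<phi> g2 y)"
      using orbit_cocycle_spec[OF g(1), of y] orbit_cocycle_spec[OF g(2), of y] by simp
    then have "\<phi> g1 y = \<phi> g2 y" using inj_f by (simp add: inj_eq)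
    then show "g1 = g2" by (rule cancel_\<Gamma>[OF g(1,2)])
  qed
  moreover have "carrier \<Delta> \<subseteq> (\<lambda>g. orbit_cocycle g y) ` carrier \<Gamma>"
  proof
    fix d assume d: "d \<in> carrier \<Delta>"
    then obtain g where "g \<in> carrier \<Gamma>" "f (\<phi> g y) = \<psi> d (f y)"
      using orbit_bwd by blast
    then show "d \<in> (\<lambda>g. orbit_cocycle g y) ` carrier \<Gamma>"
      using orbit_cocycle_eq_iff[OF _ d] by (metis rev_image_eqI)
  qed
  moreover have "(\<lambda>g. orbit_cocycle g y) ` carrier \<Gamma> \<subseteq> carrier \<Delta>"
    by (rule image_subsetI, rule conjunct1[OF orbit_cocycle_spec])
  ultimately show ?thesis
    by (simp add: bij_betw_def subset_antisym)
qed

lemma orbit_cocycle_inherits: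
  assumes g: "g \<in> carrier \<Gamma>"
    and fwd: "\<exists>d\<in>carrier \<Delta>. f (\<phi> g y) = \<psi> d (f y) \<and> P d"
    and bwd: "\<exists>g'\<in>carrier \<Gamma>. f (\<phi> g' y) = \<psi> (orbit_cocycle g y) (f y) \<and> Q g'"
  shows "P (orbit_cocycle g y) \<and> Q g"
proof
  obtain d where d: "d \<in> carrier \<Delta>" "f (\<phi> g y) = \<psi> d (f y)" "P d"
    using fwd by blast
  then have "orbit_cocycle g y = d"
    using orbit_cocycle_eq_iff[OF g d(1)] by simp
  then show "P (orbit_cocycle g y)"
    using d(3) by simp
next
  obtain g' where g': "g' \<in> carrier \<Gamma>" "f (\<phi> g' y) = \<psi> (orbit_cocycle g y) (f y)" "Q g'"
    using bwd by blast
  then have "orbit_cocycle g' y = orbit_cocycle g y"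
    using orbit_cocycle_eq_iff[OF g'(1) conjunct1[OF orbit_cocycle_spec[OF g]]] by simp
  then have "g' = g"
    using inj_onD[OF bij_betw_imp_inj_on[OF orbit_cocycle_bij[of y]], of g' g] g'(1) g by simp
  then show "Q g"
    using g'(3) by simp
qed

end

section \<open>Quasi-isometries of warped cones\<close>

lemma warped_cone_of_free_cont_action:
  assumes "group G" "fin_sym_gen_set G S" "compact (UNIV :: 'y set)"
    and "free_cont_action G (\<phi> :: 'g \<Rightarrow> 'y::metric_space \<Rightarrow> 'y)"
  shows "warped_cone G S \<phi>"
  using assms unfolding free_cont_action_def
  by (intro warped_cone.intro fin_gen_group.intro fin_gen_group_axioms.intro warped_cone_axioms.intro) auto

lemma orbit_displacement_bound:
  assumes Y: "warped_cone \<Gamma> S \<phi>" and X: "warped_cone \<Delta> T \<psi>"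
    and L: "0 \<le> L" and scales: "\<tau> ` I = {0<..}" "t ` I \<subseteq> {0<..}"
    and coarse_lipschitz: "\<And>i z z'. i \<in> I \<Longrightarrow>
       warped_dist T \<psi> (\<tau> i) (h z) (h z') \<le> L * warped_dist S \<phi> (t i) z z' + B"
    and g: "g \<in> carrier \<Gamma>"
  shows "\<exists>d\<in>carrier \<Delta>. h (\<phi> g y) = \<psi> d (h y) \<and>
           real (word_length \<Delta> T d) \<le> L * real (word_length \<Gamma> S g) + B + 1"
proof -
  have "\<exists>r\<ge>R. 0 < r \<and> warped_dist T \<psi> r (h y) (h (\<phi> g y)) \<le> L * real (word_length \<Gamma> S g) + B"
    for R
  proof -
    have "max R 1 \<in> \<tau> ` I"
      using scales(1) by simp
    then obtain i where i: "i \<in> I" "\<tau> i = max R 1"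
      by (metis imageE)
    have "warped_dist S \<phi> (t i) y (\<phi> g y) \<le> real (word_length \<Gamma> S g)"
      using warped_cone.warped_dist_orbit_le_word_length[OF Y _ g] scales(2) i(1) by auto
    then have "warped_dist T \<psi> (\<tau> i) (h y) (h (\<phi> g y)) \<le> L * real (word_length \<Gamma> S g) + B"
      using coarse_lipschitz[OF i(1), of y "\<phi> g y"] mult_left_mono[OF _ L] by fastforce
    then show ?thesis using i(2) by (intro exI[of _ "\<tau> i"]) auto
  qed
  then have "\<forall>R. \<exists>r\<ge>R. 0 < r \<and> warped_dist T \<psi> r (h y) (h (\<phi> g y)) \<le> L * real (word_length \<Gamma> S g) + B"
    by blast
  from warped_cone.orbit_point_of_bounded_warped_dist[OF X this] show ?thesis
    by (simp add: add.assoc)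
qed

lemma quasi_isometry_upper: "quasi_isometry C A dZ dW g \<Longrightarrow> dW (g z) (g z') \<le> C * dZ z z' + A"
  unfolding quasi_isometry_def by blast

lemma quasi_isometry_lower:
  assumes "quasi_isometry C A dZ dW g" "0 < C"
  shows "dZ z z' \<le> C * dW (g z) (g z') + C * A"
proof -
  have "inverse C * dZ z z' \<le> dW (g z) (g z') + A"
    using assms(1) unfolding quasi_isometry_def by (simp add: algebra_simps)
  then have "C * (inverse C * dZ z z') \<le> C * (dW (g z) (g z') + A)"
    using assms(2) by (simp add: mult_left_mono)
  moreover have "C * (inverse C * dZ z z') = dZ z z'"
    using assms(2) by simp
  ultimately show ?thesis by (simp add: algebra_simps)
qed

lemma warped_qi_orbit_forward:
  assumes Y: "warped_cone \<Gamma> S \<phi>" and X: "warped_cone \<Delta> T \<psi>"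
    and scales: "t ` I = {0<..}" "\<tau> ` I = {0<..}" and C: "0 < C"
    and qi: "\<forall>i\<in>I. quasi_isometry C A (warped_dist S \<phi> (t i)) (warped_dist T \<psi> (\<tau> i)) f"
    and g: "g \<in> carrier \<Gamma>"
  shows "\<exists>d\<in>carrier \<Delta>. f (\<phi> g y) = \<psi> d (f y) \<and>
           real (word_length \<Delta> T d) \<le> C * real (word_length \<Gamma> S g) + A + 1"
  by (rule orbit_displacement_bound[OF Y X _ scales(2) _ quasi_isometry_upper[OF qi[rule_format]] g])
    (use C scales(1) in auto)

lemma warped_qi_orbit_backward:
  assumes Y: "warped_cone \<Gamma> S \<phi>" and X: "warped_cone \<Delta> T \<psi>" and "bij f"
    and scales: "t ` I = {0<..}" "\<tau> ` I = {0<..}" and C: "1 \<le> C"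
    and qi: "\<forall>i\<in>I. quasi_isometry C A (warped_dist S \<phi> (t i)) (warped_dist T \<psi> (\<tau> i)) f"
    and d: "d \<in> carrier \<Delta>"
  shows "\<exists>g\<in>carrier \<Gamma>. f (\<phi> g y) = \<psi> d (f y) \<and>
           inverse C * real (word_length \<Gamma> S g) - (A + 1) \<le> real (word_length \<Delta> T d)"
proof -
  have inv_f: "inv_into UNIV f (f z) = z" "f (inv_into UNIV f x) = x" for z x
    using \<open>bij f\<close> by (simp_all add: bij_is_inj bij_is_surj surj_f_inv_f)
  have "warped_dist S \<phi> (t i) (inv_into UNIV f x) (inv_into UNIV f x')
      \<le> C * warped_dist T \<psi> (\<tau> i) x x' + C * A" if "i \<in> I" for i x x'
    using quasi_isometry_lower[OF qi[rule_format, OF that], of "inv_into UNIV f x" "inv_into UNIV f x'"] C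
    by (simp add: inv_f)
  from orbit_displacement_bound[OF X Y _ scales(1) _ this d, of "f y"]
  obtain g where g: "g \<in> carrier \<Gamma>" "inv_into UNIV f (\<psi> d (f y)) = \<phi> g y"
    "real (word_length \<Gamma> S g) \<le> C * real (word_length \<Delta> T d) + C * A + 1"
    using C scales(2) by (auto simp: inv_f)
  have "f (\<phi> g y) = \<psi> d (f y)"
    using arg_cong[OF g(2), of f] by (simp add: inv_f)
  moreover have "inverse C * real (word_length \<Gamma> S g)
      \<le> inverse C * (C * real (word_length \<Delta> T d) + C * A + 1)"
    using mult_left_mono[OF g(3), of "inverse C"] C by simp
  moreover have "\<dots> = real (word_length \<Delta> T d) + A + inverse C"
    using C by (simp add: field_simps)
  moreover have "inverse C \<le> 1"
    using C by (simp add: inverse_le_1_iff)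
  ultimately show ?thesis
    using g(1) by (intro bexI[of _ g]) auto
qed

theorem corollary4p7:
  fixes \<Gamma> :: "('g, 'b) monoid_scheme" and \<Delta> :: "('h, 'c) monoid_scheme"
    and S :: "'g set" and T :: "'h set"
    and \<phi> :: "'g \<Rightarrow> 'y::metric_space \<Rightarrow> 'y" and \<psi> :: "'h \<Rightarrow> 'x::metric_space \<Rightarrow> 'x"
    and f :: "'y \<Rightarrow> 'x" and I :: "'i set" and t \<tau> :: "'i \<Rightarrow> real" and C A :: real
  assumes "group \<Gamma>" and "group \<Delta>"
    and "fin_sym_gen_set \<Gamma> S" and "fin_sym_gen_set \<Delta> T"
    and "compact (UNIV :: 'y set)" and "compact (UNIV :: 'x set)"
    and "free_cont_action \<Gamma> \<phi>" and "free_cont_action \<Delta> \<psi>"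
    and "bij f"
    and "t ` I = {0<..}" and "\<tau> ` I = {0<..}"
    and "C \<ge> 1" and "A \<ge> 0"
    and "\<forall>i\<in>I. quasi_isometry C A (warped_dist S \<phi> (t i)) (warped_dist T \<psi> (\<tau> i)) f"
  shows "\<exists>\<delta> :: 'g \<Rightarrow> 'y \<Rightarrow> 'h.
           (\<forall>\<gamma>1\<in>carrier \<Gamma>. \<forall>\<gamma>2\<in>carrier \<Gamma>. \<forall>y.
              \<delta> \<gamma>2 (\<phi> \<gamma>1 y) \<otimes>\<^bsub>\<Delta>\<^esub> \<delta> \<gamma>1 y = \<delta> (\<gamma>2 \<otimes>\<^bsub>\<Gamma>\<^esub> \<gamma>1) y) \<and>
           (\<forall>y. bij_betw (\<lambda>\<gamma>. \<delta> \<gamma> y) (carrier \<Gamma>) (carrier \<Delta>)) \<and>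
           (\<exists>C' A'. C' \<ge> 1 \<and> A' \<ge> 0 \<and>
              (\<forall>\<gamma>\<in>carrier \<Gamma>. \<forall>y.
                 inverse C' * real (word_length \<Gamma> S \<gamma>) - A' \<le> real (word_length \<Delta> T (\<delta> \<gamma> y)) \<and>
                 real (word_length \<Delta> T (\<delta> \<gamma> y)) \<le> C' * real (word_length \<Gamma> S \<gamma>) + A'))"
proof -
  have Y: "warped_cone \<Gamma> S \<phi>" and X: "warped_cone \<Delta> T \<psi>"
    using assms(1-8) warped_cone_of_free_cont_action by blast+
  have C: "0 < C"
    using assms(12) by simp
  note fwd = warped_qi_orbit_forward[OF Y X assms(10,11) C assms(14)]
    and bwd = warped_qi_orbit_backward[OF Y X assms(9-12,14)]
  interpret free_orbit_matching \<Gamma> \<phi> \<Delta> \<psi> f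
  proof (intro free_orbit_matching.intro free_orbit_matching_axioms.intro)
    show "\<exists>d\<in>carrier \<Delta>. f (\<phi> g y) = \<psi> d (f y)" if "g \<in> carrier \<Gamma>" for g y
      using fwd[OF that] by blast
    show "\<exists>g\<in>carrier \<Gamma>. f (\<phi> g y) = \<psi> d (f y)" if "d \<in> carrier \<Delta>" for d y
      using bwd[OF that] by blast
  qed (use assms(7-9) bij_is_inj in \<open>auto simp: free_cont_action_def\<close>)
  have "inverse C * real (word_length \<Gamma> S g) - (A + 1) \<le> real (word_length \<Delta> T (orbit_cocycle g y)) \<and>
      real (word_length \<Delta> T (orbit_cocycle g y)) \<le> C * real (word_length \<Gamma> S g) + (A + 1)"
    if g: "g \<in> carrier \<Gamma>" for g y
    using orbit_cocycle_inherits[OF g fwd[OF g] bwd[OF conjunct1[OF orbit_cocycle_spec[OF g]]]]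
    by (simp add: add.assoc)
  moreover have "0 \<le> A + 1"
    using assms(13) by simp
  ultimately show ?thesis
    using orbit_cocycle_mult orbit_cocycle_bij assms(12) by blast
qed

end
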